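(* Let $K$ be a class of partial functions from $\mathbb{N}^k$ to $\mathbb{N}$ (of various arities $k\ge 1$) satisfying the following three conditions: (1) (Closure) $K$ contains all partial recursive functions and is closed under substitution (composition), primitive recursion and the $\mu$-operator (minimization). (2) (Computation records) For every unary function $f\in K$ there exist a set $M\subseteq\mathbb{N}$ and unary functions $\alpha,\omega\in K$ whose domains contain $M$, such that (a) the indicator function of $M$ (equal to $1$ on $M$ and $0$ outside $M$) belongs to $K$, and (b) for all $x,y\in\mathbb{N}$, $f(x)$ is defined and equals $y$ if and only if there exists $m\in M$ with $\alpha(m)=x$ and $\omega(m)=y$. (3) (Programs) There exists a binary function $F\in K$ that is universal for the unary functions in $K$: for every unary $f\in K$ there is $n\in\mathbb{N}$ such that the function $x\mapsto F(n,x)$ coincides with $f$ (as partial functions). Then there exists a set $A\subseteq\mathbb{N}$ such that $K$ is exactly the class of all partial functions that are partial recursive relative to the oracle set $A$.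
   Context: Substitution, primitive recursion and minimization are the usual operations on partial functions of natural arguments. A partial function is partial recursive relative to a set $A\subseteq\mathbb{N}$ if it is computable by an oracle machine with oracle $A$ (equivalently, its graph is recursively enumerable relative to $A$). *)

theory Defs
  imports Main
begin

text \<open>A partial function of arity k is represented by a pair (k, f) with
  f :: nat list => nat option, where f xs = None whenever length xs ~= k.\<close>

type_synonym pfun = "nat list \<Rightarrow> nat option"

definition wf_pf :: "nat \<Rightarrow> pfun \<Rightarrow> bool" where
  "wf_pf k f \<longleftrightarrow> (\<forall>xs. length xs \<noteq> k \<longrightarrow> f xs = None)"

definition comp_pf :: "nat \<Rightarrow> pfun \<Rightarrow> pfun list \<Rightarrow> pfun" where
  "comp_pf n h gs xs =
     (if length xs = n \<and> (\<forall>g\<in>set gs. g xs \<noteq> None)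
      then h (map (\<lambda>g. the (g xs)) gs) else None)"

fun prec_aux :: "pfun \<Rightarrow> pfun \<Rightarrow> nat list \<Rightarrow> nat \<Rightarrow> nat option" where
  "prec_aux g h xs 0 = g xs"
| "prec_aux g h xs (Suc y) =
     (case prec_aux g h xs y of None \<Rightarrow> None | Some z \<Rightarrow> h (xs @ [y, z]))"

definition primrec_pf :: "nat \<Rightarrow> pfun \<Rightarrow> pfun \<Rightarrow> pfun" where
  "primrec_pf n g h xs =
     (if length xs = Suc n then prec_aux g h (butlast xs) (last xs) else None)"

definition mu_ok :: "pfun \<Rightarrow> nat list \<Rightarrow> nat \<Rightarrow> bool" where
  "mu_ok g xs y \<longleftrightarrow> g (xs @ [y]) = Some 0 \<and> (\<forall>z<y. \<exists>v. g (xs @ [z]) = Some (Suc v))"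

definition mu_pf :: "nat \<Rightarrow> pfun \<Rightarrow> pfun" where
  "mu_pf n g xs =
     (if length xs = n \<and> (\<exists>y. mu_ok g xs y) then Some (LEAST y. mu_ok g xs y) else None)"

inductive_set pr_rel :: "nat set \<Rightarrow> (nat \<times> pfun) set" for A :: "nat set" where
  zero: "(n, \<lambda>xs. if length xs = n then Some 0 else None) \<in> pr_rel A"
| succ: "(1, \<lambda>xs. if length xs = 1 then Some (Suc (hd xs)) else None) \<in> pr_rel A"
| proj: "i < n \<Longrightarrow> (n, \<lambda>xs. if length xs = n then Some (xs ! i) else None) \<in> pr_rel A"
| orac: "(1, \<lambda>xs. if length xs = 1 then Some (if hd xs \<in> A then 1 else 0) else None) \<in> pr_rel A"
| subst: "(m, h) \<in> pr_rel A \<Longrightarrow> length gs = m \<Longrightarrow> (\<forall>g\<in>set gs. (n, g) \<in> pr_rel A)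
          \<Longrightarrow> (n, comp_pf n h gs) \<in> pr_rel A"
| prim_rec: "(n, g) \<in> pr_rel A \<Longrightarrow> (Suc (Suc n), h) \<in> pr_rel A
          \<Longrightarrow> (Suc n, primrec_pf n g h) \<in> pr_rel A"
| minimize: "(Suc n, g) \<in> pr_rel A \<Longrightarrow> (n, mu_pf n g) \<in> pr_rel A"

abbreviation partial_recursive :: "nat \<Rightarrow> pfun \<Rightarrow> bool" where
  "partial_recursive k f \<equiv> (k, f) \<in> pr_rel {}"

definition indicator_pf :: "nat set \<Rightarrow> pfun" where
  "indicator_pf M xs = (if length xs = 1 then Some (if hd xs \<in> M then 1 else 0) else None)"

end

theory Submission
  imports Defs "HOL-Library.Nat_Bijection"
begin

text \<open>Let \<open>F\<close> be universal for the unary members of \<open>K\<close> and put \<open>G z = F (pfst z, psnd z)\<close>,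
  so that every unary \<open>f \<in> K\<close> is a section \<open>x \<mapsto> G \<langle>c, x\<rangle>\<close>. The oracle is the set \<open>A\<close> of
  codes \<open>\<langle>m, \<langle>x, y\<rangle>\<rangle>\<close> of the computation records of \<open>G\<close> (\<open>m \<in> M\<close>, \<open>\<alpha> m = x\<close>,
  \<open>\<omega> m = y\<close>). Its indicator lies in \<open>K\<close>, because the test \<open>\<alpha> m = x \<and> \<omega> m = y\<close> need
  only be evaluated once \<open>m \<in> M\<close> is known, and primitive recursion on the indicator of \<open>M\<close>
  makes this lazy conditional available; hence every \<open>A\<close>-recursive function lies in \<open>K\<close>.
  Conversely \<open>f x\<close> is the \<open>\<omega>\<close>-value of the least code in \<open>A\<close> whose \<open>\<alpha>\<close>-value is \<open>\<langle>c, x\<rangle>\<close>,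
  so \<open>f\<close> is \<open>A\<close>-recursive, and functions of higher arity reduce to unary ones by tuple
  coding.\<close>

subsection \<open>Total functions\<close>

definition total_pf :: "nat \<Rightarrow> (nat list \<Rightarrow> nat) \<Rightarrow> pfun" where
  "total_pf n \<phi> = (\<lambda>xs. if length xs = n then Some (\<phi> xs) else None)"

lemma total_pf_apply: "total_pf n \<phi> xs = (if length xs = n then Some (\<phi> xs) else None)"
  by (simp add: total_pf_def)

abbreviation total_rec :: "nat set \<Rightarrow> nat \<Rightarrow> (nat list \<Rightarrow> nat) \<Rightarrow> bool" where
  "total_rec A n \<phi> \<equiv> (n, total_pf n \<phi>) \<in> pr_rel A"

lemma total_pf_cong: "(\<And>xs. length xs = n \<Longrightarrow> \<phi> xs = \<psi> xs) \<Longrightarrow> total_pf n \<phi> = total_pf n \<psi>"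
  unfolding total_pf_def by auto

lemma total_rec_cong:
  "total_rec A n \<phi> \<Longrightarrow> (\<And>xs. length xs = n \<Longrightarrow> \<phi> xs = \<psi> xs) \<Longrightarrow> total_rec A n \<psi>"
  using total_pf_cong by metis

lemma total_rec_zero: "total_rec A n (\<lambda>_. 0)"
  using pr_rel.zero unfolding total_pf_def .

lemma total_rec_proj: "i < n \<Longrightarrow> total_rec A n (\<lambda>xs. xs ! i)"
  using pr_rel.proj unfolding total_pf_def .

lemma total_rec_hd: "total_rec A 1 hd"
  by (rule total_rec_cong[OF total_rec_proj[of 0]]) (auto simp: length_Suc_conv)

lemma comp_pf_total_pf:
  "length \<psi>s = m \<Longrightarrow>
    comp_pf n (total_pf m \<phi>) (map (total_pf n) \<psi>s) = total_pf n (\<lambda>xs. \<phi> (map (\<lambda>\<psi>. \<psi> xs) \<psi>s))"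
  unfolding comp_pf_def total_pf_apply by (auto simp: fun_eq_iff comp_def)

lemma total_rec_comp:
  assumes "total_rec A m \<phi>" and "length \<psi>s = m" and "\<forall>\<psi>\<in>set \<psi>s. total_rec A n \<psi>"
  shows "total_rec A n (\<lambda>xs. \<phi> (map (\<lambda>\<psi>. \<psi> xs) \<psi>s))"
proof -
  have "(n, comp_pf n (total_pf m \<phi>) (map (total_pf n) \<psi>s)) \<in> pr_rel A"
    by (rule pr_rel.subst[OF assms(1)]) (use assms in auto)
  then show ?thesis using assms(2) by (simp add: comp_pf_total_pf)
qed

lemma total_rec_comp1:
  assumes "total_rec A 1 \<phi>" and "\<And>x. \<phi> [x] = f x" and "total_rec A n \<psi>"
  shows "total_rec A n (\<lambda>xs. f (\<psi> xs))"
  using total_rec_comp[OF assms(1), of "[\<psi>]"] assms(2,3) by simp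

lemma total_rec_comp2:
  assumes "total_rec A 2 \<phi>" and "\<And>x y. \<phi> [x, y] = f x y"
    and "total_rec A n \<psi>\<^sub>1" and "total_rec A n \<psi>\<^sub>2"
  shows "total_rec A n (\<lambda>xs. f (\<psi>\<^sub>1 xs) (\<psi>\<^sub>2 xs))"
  using total_rec_comp[OF assms(1), of "[\<psi>\<^sub>1, \<psi>\<^sub>2]"] assms(2-4) by simp

lemma total_rec_Suc: "total_rec A n \<psi> \<Longrightarrow> total_rec A n (\<lambda>xs. Suc (\<psi> xs))"
  by (rule total_rec_comp1[OF pr_rel.succ[folded total_pf_def]]) simp

lemma total_rec_oracle: "total_rec A n \<psi> \<Longrightarrow> total_rec A n (\<lambda>xs. if \<psi> xs \<in> A then 1 else 0)"
  by (rule total_rec_comp1[OF pr_rel.orac[folded total_pf_def]]) simp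

lemma total_rec_const: "total_rec A n (\<lambda>_. c)"
  by (induction c) (auto intro: total_rec_zero total_rec_Suc)

fun prec_total :: "(nat list \<Rightarrow> nat) \<Rightarrow> (nat list \<Rightarrow> nat) \<Rightarrow> nat list \<Rightarrow> nat \<Rightarrow> nat" where
  "prec_total g h xs 0 = g xs"
| "prec_total g h xs (Suc y) = h (xs @ [y, prec_total g h xs y])"

lemma prec_aux_total_pf:
  "length xs = n \<Longrightarrow> prec_aux (total_pf n g) (total_pf (Suc (Suc n)) h) xs y = Some (prec_total g h xs y)"
  by (induction y) (auto simp: total_pf_apply)

lemma primrec_pf_total_pf:
  "primrec_pf n (total_pf n g) (total_pf (Suc (Suc n)) h)
    = total_pf (Suc n) (\<lambda>xs. prec_total g h (butlast xs) (last xs))"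
  by (auto simp: fun_eq_iff primrec_pf_def total_pf_apply prec_aux_total_pf)

lemma total_rec_primrec:
  "total_rec A n g \<Longrightarrow> total_rec A (Suc (Suc n)) h
    \<Longrightarrow> total_rec A (Suc n) (\<lambda>xs. prec_total g h (butlast xs) (last xs))"
  using pr_rel.prim_rec primrec_pf_total_pf by metis

lemma mu_pf_total_pf:
  assumes "length xs = n"
  shows "mu_pf n (total_pf (Suc n) \<phi>) xs
    = (if \<exists>y. \<phi> (xs @ [y]) = 0 then Some (LEAST y. \<phi> (xs @ [y]) = 0) else None)"
proof -
  have ok: "mu_ok (total_pf (Suc n) \<phi>) xs y \<longleftrightarrow> \<phi> (xs @ [y]) = 0 \<and> (\<forall>z<y. \<phi> (xs @ [z]) \<noteq> 0)" for y
    using assms by (auto simp: mu_ok_def total_pf_apply gr0_conv_Suc)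
  show ?thesis
  proof (cases "\<exists>y. \<phi> (xs @ [y]) = 0")
    case True
    define y\<^sub>0 where "y\<^sub>0 = (LEAST y. \<phi> (xs @ [y]) = 0)"
    have y\<^sub>0: "mu_ok (total_pf (Suc n) \<phi>) xs y\<^sub>0"
      unfolding ok y\<^sub>0_def using True by (metis (mono_tags, lifting) LeastI not_less_Least)
    have "(LEAST y. mu_ok (total_pf (Suc n) \<phi>) xs y) = y\<^sub>0"
      by (rule Least_equality[of "mu_ok (total_pf (Suc n) \<phi>) xs", OF y\<^sub>0])
        (auto simp: ok y\<^sub>0_def intro: Least_le)
    then show ?thesis using True y\<^sub>0 assms unfolding mu_pf_def y\<^sub>0_def by auto
  next
    case False
    then show ?thesis unfolding mu_pf_def ok by auto
  qed
qed

lemma total_rec_mu: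
  assumes "total_rec A (Suc n) \<phi>" and "\<And>xs. length xs = n \<Longrightarrow> \<exists>y. \<phi> (xs @ [y]) = 0"
  shows "total_rec A n (\<lambda>xs. LEAST y. \<phi> (xs @ [y]) = 0)"
proof -
  have "mu_pf n (total_pf (Suc n) \<phi>) = total_pf n (\<lambda>xs. LEAST y. \<phi> (xs @ [y]) = 0)"
  proof
    fix xs :: "nat list"
    show "mu_pf n (total_pf (Suc n) \<phi>) xs = total_pf n (\<lambda>xs. LEAST y. \<phi> (xs @ [y]) = 0) xs"
      using assms(2)[of xs] mu_pf_total_pf[of xs n \<phi>]
      by (cases "length xs = n") (simp_all add: total_pf_apply mu_pf_def)
  qed
  then show ?thesis using pr_rel.minimize[OF assms(1)] by simp
qed

lemma pr_rel_undefined: "(n, \<lambda>_. None) \<in> pr_rel A"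
proof -
  have "mu_pf n (total_pf (Suc n) (\<lambda>_. 1)) = (\<lambda>_. None)"
  proof
    fix xs :: "nat list"
    show "mu_pf n (total_pf (Suc n) (\<lambda>_. 1)) xs = None"
      using mu_pf_total_pf[of xs n "\<lambda>_. 1"] by (cases "length xs = n") (auto simp: mu_pf_def)
  qed
  then show ?thesis using pr_rel.minimize[OF total_rec_const[where c=1 and n="Suc n" and A=A]] by simp
qed

lemma pr_rel_wf_pf: "(n, f) \<in> pr_rel A \<Longrightarrow> wf_pf n f"
  by (induction rule: pr_rel.induct) (auto simp: wf_pf_def comp_pf_def primrec_pf_def mu_pf_def)

lemma pr_rel_comp_nullary: "(n, comp_pf n h []) \<in> pr_rel A"
proof (cases "h []")
  case None
  then have "comp_pf n h [] = (\<lambda>_. None)" by (simp add: comp_pf_def fun_eq_iff)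
  then show ?thesis using pr_rel_undefined by simp
next
  case (Some c)
  then have "comp_pf n h [] = total_pf n (\<lambda>_. c)" by (simp add: comp_pf_def total_pf_def fun_eq_iff)
  then show ?thesis using total_rec_const by simp
qed

lemma total_rec_pred:
  assumes "total_rec A n \<psi>"
  shows "total_rec A n (\<lambda>xs. \<psi> xs - 1)"
proof -
  have "total_rec A (Suc 0) (\<lambda>xs. prec_total (\<lambda>_. 0) (\<lambda>ys. ys ! 0) (butlast xs) (last xs))"
    by (rule total_rec_primrec[OF total_rec_zero total_rec_proj]) simp
  moreover have "prec_total (\<lambda>_. 0) (\<lambda>ys. ys ! 0) [] y = y - 1" for y
    by (cases y) auto
  ultimately have "total_rec A 1 (\<lambda>xs. hd xs - 1)"
    by (auto elim!: total_rec_cong simp: length_Suc_conv)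
  then show ?thesis by (rule total_rec_comp1) (simp_all add: assms)
qed

lemma total_rec_add:
  assumes "total_rec A n \<psi>\<^sub>1" and "total_rec A n \<psi>\<^sub>2"
  shows "total_rec A n (\<lambda>xs. \<psi>\<^sub>1 xs + \<psi>\<^sub>2 xs)"
proof -
  have "total_rec A (Suc (Suc 0))
      (\<lambda>xs. prec_total (\<lambda>ys. ys ! 0) (\<lambda>ys. Suc (ys ! 2)) (butlast xs) (last xs))"
    by (rule total_rec_primrec[OF total_rec_proj total_rec_Suc[OF total_rec_proj]]) simp_all
  moreover have "prec_total (\<lambda>ys. ys ! 0) (\<lambda>ys. Suc (ys ! 2)) [x] y = x + y" for x y
    by (induction y) auto
  ultimately have "total_rec A 2 (\<lambda>xs. xs ! 0 + xs ! 1)"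
    by (auto elim!: total_rec_cong simp: length_Suc_conv numeral_2_eq_2)
  then show ?thesis by (rule total_rec_comp2) (simp_all add: assms)
qed

lemma total_rec_diff:
  assumes "total_rec A n \<psi>\<^sub>1" and "total_rec A n \<psi>\<^sub>2"
  shows "total_rec A n (\<lambda>xs. \<psi>\<^sub>1 xs - \<psi>\<^sub>2 xs)"
proof -
  have "total_rec A (Suc (Suc 0))
      (\<lambda>xs. prec_total (\<lambda>ys. ys ! 0) (\<lambda>ys. ys ! 2 - 1) (butlast xs) (last xs))"
    by (rule total_rec_primrec[OF total_rec_proj total_rec_pred[OF total_rec_proj]]) simp_all
  moreover have "prec_total (\<lambda>ys. ys ! 0) (\<lambda>ys. ys ! 2 - 1) [x] y = x - y" for x y
    by (induction y) auto
  ultimately have "total_rec A 2 (\<lambda>xs. xs ! 0 - xs ! 1)"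
    by (auto elim!: total_rec_cong simp: length_Suc_conv numeral_2_eq_2)
  then show ?thesis by (rule total_rec_comp2) (simp_all add: assms)
qed

lemma total_rec_triangle:
  assumes "total_rec A n \<psi>"
  shows "total_rec A n (\<lambda>xs. triangle (\<psi> xs))"
proof -
  have "total_rec A (Suc 0)
      (\<lambda>xs. prec_total (\<lambda>_. 0) (\<lambda>ys. ys ! 1 + Suc (ys ! 0)) (butlast xs) (last xs))"
    by (rule total_rec_primrec[OF total_rec_zero
          total_rec_add[OF total_rec_proj total_rec_Suc[OF total_rec_proj]]]) simp_all
  moreover have "prec_total (\<lambda>_. 0) (\<lambda>ys. ys ! 1 + Suc (ys ! 0)) [] y = triangle y" for y
    by (induction y) auto
  ultimately have "total_rec A 1 (\<lambda>xs. triangle (hd xs))"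
    by (auto elim!: total_rec_cong simp: length_Suc_conv)
  then show ?thesis by (rule total_rec_comp1) (simp_all add: assms)
qed

lemma total_rec_prod_encode:
  "total_rec A n \<psi>\<^sub>1 \<Longrightarrow> total_rec A n \<psi>\<^sub>2 \<Longrightarrow> total_rec A n (\<lambda>xs. prod_encode (\<psi>\<^sub>1 xs, \<psi>\<^sub>2 xs))"
  unfolding prod_encode_def by (simp add: total_rec_add total_rec_triangle)

lemma total_rec_eq:
  assumes "total_rec A n \<psi>\<^sub>1" and "total_rec A n \<psi>\<^sub>2"
  shows "total_rec A n (\<lambda>xs. if \<psi>\<^sub>1 xs = \<psi>\<^sub>2 xs then 1 else 0)"
proof -
  have "total_rec A n (\<lambda>xs. 1 - ((\<psi>\<^sub>1 xs - \<psi>\<^sub>2 xs) + (\<psi>\<^sub>2 xs - \<psi>\<^sub>1 xs)))"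
    by (intro total_rec_diff total_rec_const total_rec_add assms)
  then show ?thesis by (rule total_rec_cong) auto
qed

lemma total_rec_conj:
  assumes "total_rec A n (\<lambda>xs. if P xs then 1 else 0)"
    and "total_rec A n (\<lambda>xs. if Q xs then 1 else 0)"
  shows "total_rec A n (\<lambda>xs. if P xs \<and> Q xs then 1 else 0)"
proof -
  have "total_rec A n (\<lambda>xs. (if P xs then 1 else 0) + (if Q xs then 1 else 0) - 1)"
    by (intro total_rec_diff total_rec_add total_rec_const assms)
  then show ?thesis by (rule total_rec_cong) auto
qed

subsection \<open>Unpairing and tuple coding\<close>

definition pfst :: "nat \<Rightarrow> nat" where "pfst z = fst (prod_decode z)"
definition psnd :: "nat \<Rightarrow> nat" where "psnd z = snd (prod_decode z)"

lemma pfst_prod_encode [simp]: "pfst (prod_encode (a, b)) = a"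
  by (simp add: pfst_def)

lemma psnd_prod_encode [simp]: "psnd (prod_encode (a, b)) = b"
  by (simp add: psnd_def)

lemma prod_encode_pfst_psnd [simp]: "prod_encode (pfst z, psnd z) = z"
  by (simp add: pfst_def psnd_def)

definition diag :: "nat \<Rightarrow> nat" where "diag z = (LEAST s. z < triangle (Suc s))"

lemma triangle_mono: "m \<le> n \<Longrightarrow> triangle m \<le> triangle n"
  by (induction n rule: dec_induct) auto

lemma diag_prod_encode: "diag (prod_encode (a, b)) = a + b"
  unfolding diag_def
proof (rule Least_equality)
  show "prod_encode (a, b) < triangle (Suc (a + b))"
    by (simp add: prod_encode_def)
next
  fix s assume "prod_encode (a, b) < triangle (Suc s)"
  moreover have "triangle (Suc s) \<le> prod_encode (a, b)" if "s < a + b"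
    using triangle_mono[of "Suc s" "a + b"] that by (simp add: prod_encode_def del: triangle_Suc)
  ultimately show "a + b \<le> s" by (meson not_le)
qed

lemma pfst_conv_diag: "pfst z = z - triangle (diag z)"
proof -
  obtain a b where z: "z = prod_encode (a, b)" by (metis prod_encode_pfst_psnd)
  then have "pfst z = a" and "diag z = a + b" by (simp_all add: diag_prod_encode)
  moreover have "z - triangle (a + b) = a" using z by (simp add: prod_encode_def)
  ultimately show ?thesis by simp
qed

lemma psnd_conv_diag: "psnd z = diag z - pfst z"
proof -
  obtain a b where z: "z = prod_encode (a, b)" by (metis prod_encode_pfst_psnd)
  then show ?thesis by (simp add: diag_prod_encode)
qed

lemma total_rec_diag:
  assumes "total_rec A n \<psi>"
  shows "total_rec A n (\<lambda>xs. diag (\<psi> xs))"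
proof -
  let ?below = "\<lambda>xs. 1 - (triangle (Suc (xs ! 1)) - xs ! 0)"
  have "total_rec A (Suc 0) (\<lambda>xs. LEAST s. ?below (xs @ [s]) = 0)"
  proof (rule total_rec_mu)
    show "total_rec A (Suc (Suc 0)) ?below"
      by (intro total_rec_diff total_rec_const total_rec_triangle total_rec_Suc total_rec_proj) simp_all
  next
    fix xs :: "nat list" assume "length xs = Suc 0"
    then obtain z where "xs = [z]" by (auto simp: length_Suc_conv)
    then show "\<exists>s. ?below (xs @ [s]) = 0" by (intro exI[of _ z]) auto
  qed
  moreover have "1 - (t - z) = (0 :: nat) \<longleftrightarrow> z < t" for t z :: nat
    by auto
  ultimately have "total_rec A 1 (\<lambda>xs. diag (hd xs))"
    by (auto elim!: total_rec_cong simp: length_Suc_conv diag_def simp del: triangle_Suc)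
  then show ?thesis by (rule total_rec_comp1) (simp_all add: assms)
qed

lemma total_rec_pfst: "total_rec A n \<psi> \<Longrightarrow> total_rec A n (\<lambda>xs. pfst (\<psi> xs))"
  unfolding pfst_conv_diag by (intro total_rec_diff total_rec_triangle total_rec_diag)

lemma total_rec_psnd: "total_rec A n \<psi> \<Longrightarrow> total_rec A n (\<lambda>xs. psnd (\<psi> xs))"
  unfolding psnd_conv_diag by (intro total_rec_diff total_rec_pfst total_rec_diag)

fun encode_tuple :: "nat list \<Rightarrow> nat" where
  "encode_tuple [] = 0"
| "encode_tuple [x] = x"
| "encode_tuple (x # y # xs) = prod_encode (x, encode_tuple (y # xs))"

fun decode_tuple :: "nat \<Rightarrow> nat \<Rightarrow> nat list" where
  "decode_tuple 0 z = []"
| "decode_tuple (Suc 0) z = [z]"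
| "decode_tuple (Suc (Suc k)) z = pfst z # decode_tuple (Suc k) (psnd z)"

lemma decode_encode_tuple: "length xs = k \<Longrightarrow> 1 \<le> k \<Longrightarrow> decode_tuple k (encode_tuple xs) = xs"
  by (induction xs arbitrary: k rule: encode_tuple.induct) auto

lemma length_decode_tuple [simp]: "length (decode_tuple k z) = k"
  by (induction k z rule: decode_tuple.induct) auto

lemma total_rec_encode_tuple: "total_rec A (Suc k) encode_tuple"
proof (induction k)
  case 0
  show ?case by (rule total_rec_cong[OF total_rec_proj[of 0 "Suc 0"]]) (auto simp: length_Suc_conv)
next
  case (Suc k)
  let ?tl = "map (\<lambda>i xs. xs ! Suc i) [0..<Suc k]"
  have "total_rec A (Suc (Suc k)) (\<lambda>xs. encode_tuple (map (\<lambda>\<psi>. \<psi> xs) ?tl))"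
    by (rule total_rec_comp[OF Suc.IH]) (auto intro: total_rec_proj)
  then have "total_rec A (Suc (Suc k)) (\<lambda>xs. prod_encode (xs ! 0, encode_tuple (map (\<lambda>\<psi>. \<psi> xs) ?tl)))"
    by (intro total_rec_prod_encode total_rec_proj) auto
  then show ?case
  proof (rule total_rec_cong)
    fix xs :: "nat list" assume "length xs = Suc (Suc k)"
    then obtain x y ys where xs: "xs = x # y # ys" and "length ys = k"
      by (auto simp: length_Suc_conv)
    then have "map (\<lambda>\<psi>. \<psi> xs) ?tl = y # ys"
      using map_nth[of "y # ys"] by (simp add: comp_def del: upt_Suc)
    then show "prod_encode (xs ! 0, encode_tuple (map (\<lambda>\<psi>. \<psi> xs) ?tl)) = encode_tuple xs"
      using xs by simp
  qed
qed

lemma total_rec_decode_tuple_nth: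
  "i < Suc k \<Longrightarrow> total_rec A n \<psi> \<Longrightarrow> total_rec A n (\<lambda>xs. decode_tuple (Suc k) (\<psi> xs) ! i)"
proof (induction k arbitrary: i \<psi>)
  case 0
  then show ?case by (auto elim: total_rec_cong)
next
  case (Suc k)
  then show ?case
    using total_rec_pfst[OF Suc.prems(2)] Suc.IH[of _ "\<lambda>xs. psnd (\<psi> xs)"] total_rec_psnd
    by (cases i) auto
qed

definition unpack_pfs :: "nat \<Rightarrow> pfun list" where
  "unpack_pfs k = map (\<lambda>i. total_pf 1 (\<lambda>xs. decode_tuple k (hd xs) ! i)) [0..<k]"

lemma pr_rel_unpack_pfs:
  assumes "1 \<le> k" and "g \<in> set (unpack_pfs k)"
  shows "(1, g) \<in> pr_rel A"
proof -
  obtain i where "i < k" and g: "g = total_pf 1 (\<lambda>xs. decode_tuple k (hd xs) ! i)"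
    using assms(2) by (auto simp: unpack_pfs_def)
  moreover obtain k' where "k = Suc k'" using assms(1) by (cases k) auto
  ultimately show ?thesis using total_rec_decode_tuple_nth[OF _ total_rec_hd] by simp
qed

lemma pr_rel_of_unpacked:
  assumes "(1, comp_pf 1 f (unpack_pfs k)) \<in> pr_rel A" and "wf_pf k f" and "1 \<le> k"
  shows "(k, f) \<in> pr_rel A"
proof -
  have "total_rec A k encode_tuple"
    using total_rec_encode_tuple[of "k - 1" A] assms(3) by simp
  then have "(k, comp_pf k (comp_pf 1 f (unpack_pfs k)) [total_pf k encode_tuple]) \<in> pr_rel A"
    by (intro pr_rel.subst[OF assms(1)]) auto
  moreover have "comp_pf k (comp_pf 1 f (unpack_pfs k)) [total_pf k encode_tuple] = f"
  proof
    fix xs :: "nat list"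
    show "comp_pf k (comp_pf 1 f (unpack_pfs k)) [total_pf k encode_tuple] xs = f xs"
    proof (cases "length xs = k")
      case False
      then show ?thesis using assms(2) by (simp add: comp_pf_def wf_pf_def)
    next
      case True
      have "map (\<lambda>g. the (g [encode_tuple xs])) (unpack_pfs k) = decode_tuple k (encode_tuple xs)"
        using map_nth[of "decode_tuple k (encode_tuple xs)"]
        by (simp add: unpack_pfs_def total_pf_apply comp_def)
      also have "\<dots> = xs" using decode_encode_tuple True assms(3) by blast
      finally show ?thesis using True by (simp add: comp_pf_def total_pf_apply unpack_pfs_def)
    qed
  qed
  ultimately show ?thesis by simp
qed

subsection \<open>Unbounded search and computation records\<close>

lemma pr_rel_search:
  assumes R: "total_rec A 2 (\<lambda>xs. if R (xs ! 0) (xs ! 1) then 1 else 0)"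
    and g: "total_rec A 1 (\<lambda>xs. g (hd xs))"
    and graph: "\<And>x y. f [x] = Some y \<longleftrightarrow> (\<exists>t. R x t \<and> g t = y)"
    and wf: "wf_pf 1 f"
  shows "(1, f) \<in> pr_rel A"
proof -
  let ?test = "\<lambda>xs. 1 - (if R (xs ! 0) (xs ! 1) then 1 else 0)"
  let ?search = "mu_pf 1 (total_pf (Suc 1) ?test)"
  have "(1, ?search) \<in> pr_rel A"
    using total_rec_diff[OF total_rec_const[where c=1] R]
    by (intro pr_rel.minimize) (simp add: numeral_2_eq_2)
  then have "(1, comp_pf 1 (total_pf 1 (\<lambda>xs. g (hd xs))) [?search]) \<in> pr_rel A"
    by (intro pr_rel.subst[OF g]) auto
  moreover have "comp_pf 1 (total_pf 1 (\<lambda>xs. g (hd xs))) [?search] = f"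
  proof
    fix xs :: "nat list"
    show "comp_pf 1 (total_pf 1 (\<lambda>xs. g (hd xs))) [?search] xs = f xs"
    proof (cases "length xs = 1")
      case False
      then show ?thesis using wf by (simp add: comp_pf_def wf_pf_def)
    next
      case True
      then obtain x where xs: "xs = [x]" by (auto simp: length_Suc_conv)
      have search: "?search [x] = (if \<exists>t. R x t then Some (LEAST t. R x t) else None)"
        using mu_pf_total_pf[of "[x]" 1 ?test] by simp
      have comp: "comp_pf 1 (total_pf 1 (\<lambda>xs. g (hd xs))) [?search] [x] = map_option g (?search [x])"
        by (cases "?search [x]") (simp_all add: comp_pf_def total_pf_apply)
      show ?thesis
      proof (cases "\<exists>t. R x t")
        case True
        then have "f [x] = Some (g (LEAST t. R x t))"
          using graph LeastI_ex[of "R x"] by blast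
        then show ?thesis unfolding xs comp search using True by simp
      next
        case False
        then have "f [x] = None" using graph by (meson not_Some_eq)
        then show ?thesis unfolding xs comp search using False by simp
      qed
    qed
  qed
  ultimately show ?thesis by simp
qed

definition record_set :: "nat set \<Rightarrow> pfun \<Rightarrow> pfun \<Rightarrow> nat set" where
  "record_set M \<alpha> \<omega> =
    {prod_encode (m, prod_encode (x, y)) | m x y. m \<in> M \<and> \<alpha> [m] = Some x \<and> \<omega> [m] = Some y}"

lemma mem_record_set:
  "t \<in> record_set M \<alpha> \<omega> \<longleftrightarrow>
    pfst t \<in> M \<and> \<alpha> [pfst t] = Some (pfst (psnd t)) \<and> \<omega> [pfst t] = Some (psnd (psnd t))"
proof
  assume "t \<in> record_set M \<alpha> \<omega>"
  then show "pfst t \<in> M \<and> \<alpha> [pfst t] = Some (pfst (psnd t)) \<and> \<omega> [pfst t] = Some (psnd (psnd t))"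
    by (auto simp: record_set_def)
next
  assume "pfst t \<in> M \<and> \<alpha> [pfst t] = Some (pfst (psnd t)) \<and> \<omega> [pfst t] = Some (psnd (psnd t))"
  then show "t \<in> record_set M \<alpha> \<omega>"
    unfolding record_set_def
    by (intro CollectI exI[of _ "pfst t"] exI[of _ "pfst (psnd t)"] exI[of _ "psnd (psnd t)"]) simp
qed

lemma pr_rel_record_set_section:
  assumes records: "\<And>x y. G [x] = Some y \<longleftrightarrow> (\<exists>m\<in>M. \<alpha> [m] = Some x \<and> \<omega> [m] = Some y)"
    and f_section: "\<And>x. f [x] = G [prod_encode (c, x)]"
    and wf: "wf_pf 1 f"
  shows "(1, f) \<in> pr_rel (record_set M \<alpha> \<omega>)"
proof -
  let ?B = "record_set M \<alpha> \<omega>"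
  let ?R = "\<lambda>x t. t \<in> ?B \<and> pfst (psnd t) = prod_encode (c, x)"
  have graph: "f [x] = Some y \<longleftrightarrow> (\<exists>t. ?R x t \<and> psnd (psnd t) = y)" for x y
  proof -
    have "f [x] = Some y \<longleftrightarrow> (\<exists>m\<in>M. \<alpha> [m] = Some (prod_encode (c, x)) \<and> \<omega> [m] = Some y)"
      using records f_section by simp
    also have "\<dots> \<longleftrightarrow> (\<exists>t. ?R x t \<and> psnd (psnd t) = y)"
    proof
      assume "\<exists>m\<in>M. \<alpha> [m] = Some (prod_encode (c, x)) \<and> \<omega> [m] = Some y"
      then obtain m where "m \<in> M" "\<alpha> [m] = Some (prod_encode (c, x))" "\<omega> [m] = Some y" by blast
      then show "\<exists>t. ?R x t \<and> psnd (psnd t) = y"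
        by (intro exI[of _ "prod_encode (m, prod_encode (prod_encode (c, x), y))"])
          (simp add: mem_record_set)
    qed (auto simp: mem_record_set)
    finally show ?thesis .
  qed
  show ?thesis
  proof (rule pr_rel_search[where R = ?R and g = "\<lambda>t. psnd (psnd t)", OF _ _ graph wf])
    show "total_rec ?B 2 (\<lambda>xs. if ?R (xs ! 0) (xs ! 1) then 1 else 0)"
      by (intro total_rec_conj total_rec_oracle total_rec_eq total_rec_pfst total_rec_psnd
          total_rec_prod_encode total_rec_const total_rec_proj) simp_all
    show "total_rec ?B 1 (\<lambda>xs. psnd (psnd (hd xs)))"
      by (intro total_rec_psnd total_rec_hd)
  qed
qed

subsection \<open>Classes closed under the Kleene schemes\<close>

locale kleene_closed_class =
  fixes K :: "(nat \<times> pfun) set"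
  assumes arity: "(k, f) \<in> K \<Longrightarrow> 1 \<le> k \<and> wf_pf k f"
    and contains_pr: "1 \<le> k \<Longrightarrow> partial_recursive k f \<Longrightarrow> (k, f) \<in> K"
    and closed_comp: "(m, h) \<in> K \<Longrightarrow> length gs = m \<Longrightarrow> \<forall>g\<in>set gs. (n, g) \<in> K \<Longrightarrow> (n, comp_pf n h gs) \<in> K"
    and closed_primrec:
      "1 \<le> n \<Longrightarrow> (n, g) \<in> K \<Longrightarrow> (Suc (Suc n), h) \<in> K \<Longrightarrow> (Suc n, primrec_pf n g h) \<in> K"
    and closed_primrec_const:
      "(2, h) \<in> K \<Longrightarrow> (1, primrec_pf 0 (\<lambda>xs. if xs = [] then c else None) h) \<in> K"
    and closed_mu: "1 \<le> n \<Longrightarrow> (Suc n, g) \<in> K \<Longrightarrow> (n, mu_pf n g) \<in> K"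
begin

lemma total_rec_in_K: "total_rec {} n \<phi> \<Longrightarrow> 1 \<le> n \<Longrightarrow> (n, total_pf n \<phi>) \<in> K"
  by (rule contains_pr)

lemma pr_rel_in_K:
  assumes indicator_in_K: "(1, indicator_pf B) \<in> K"
  shows "(n, f) \<in> pr_rel B \<Longrightarrow> 1 \<le> n \<Longrightarrow> (n, f) \<in> K"
proof (induction rule: pr_rel.induct)
  case (zero n)
  then show ?case using contains_pr pr_rel.zero by blast
next
  case succ
  then show ?case using contains_pr pr_rel.succ by blast
next
  case (proj i n)
  then show ?case using contains_pr pr_rel.proj by blast
next
  case orac
  then show ?case using indicator_in_K by (simp add: indicator_pf_def[abs_def])
next
  case (subst m h gs n)
  show ?case
  proof (cases "m = 0")
    case False
    then show ?thesis using subst closed_comp by auto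
  next
    case True
    then show ?thesis using subst contains_pr pr_rel_comp_nullary by auto
  qed
next
  case (prim_rec n g h)
  show ?case
  proof (cases "n = 0")
    case False
    then show ?thesis using prim_rec closed_primrec by auto
  next
    case True
    have "g = (\<lambda>xs. if xs = [] then g [] else None)"
      using pr_rel_wf_pf[OF prim_rec(1)] True by (auto simp: wf_pf_def)
    moreover have "(2, h) \<in> K"
      using prim_rec.IH(2) True by (simp add: numeral_2_eq_2)
    ultimately show ?thesis using closed_primrec_const True by (metis One_nat_def)
  qed
next
  case (minimize n g)
  then show ?case using closed_mu by auto
qed

lemma comp_total_in_K:
  assumes "(m, h) \<in> K" and "length \<psi>s = m" and "\<forall>\<psi>\<in>set \<psi>s. total_rec {} n \<psi>" and "1 \<le> n"
  shows "(n, comp_pf n h (map (total_pf n) \<psi>s)) \<in> K"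
  by (rule closed_comp[OF assms(1)]) (use assms(2-4) in \<open>auto intro: total_rec_in_K\<close>)

lemma indicator_vimage_in_K:
  assumes "(1, indicator_pf M) \<in> K" and "total_rec {} 1 (\<lambda>xs. \<phi> (hd xs))"
  shows "(1, indicator_pf (\<phi> -` M)) \<in> K"
proof -
  have "comp_pf 1 (indicator_pf M) [total_pf 1 (\<lambda>xs. \<phi> (hd xs))] = indicator_pf (\<phi> -` M)"
    by (auto simp: fun_eq_iff comp_pf_def total_pf_apply indicator_pf_def)
  then show ?thesis using comp_total_in_K[OF assms(1), of "[\<lambda>xs. \<phi> (hd xs)]" 1] assms(2) by simp
qed

text \<open>Primitive recursion on the value of the indicator of \<open>S\<close> evaluates \<open>h\<close> only inside \<open>S\<close>,
  so \<open>h\<close> may be undefined outside \<open>S\<close>.\<close>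

lemma conditional_in_K:
  assumes S: "(1, indicator_pf S) \<in> K" and h: "(1, h) \<in> K"
  shows "(1, \<lambda>xs. if length xs = 1 then if hd xs \<in> S then h xs else Some 0 else None) \<in> K"
proof -
  define H where "H = comp_pf 3 h [total_pf 3 (\<lambda>xs. xs ! 0)]"
  define G where "G = primrec_pf 1 (total_pf 1 (\<lambda>_. 0)) H"
  have "(3, H) \<in> K"
    unfolding H_def using comp_total_in_K[OF h, of "[\<lambda>xs. xs ! 0]" 3] total_rec_proj by simp
  then have G: "(2, G) \<in> K"
    using closed_primrec[of 1 "total_pf 1 (\<lambda>_. 0)" H] total_rec_in_K[OF total_rec_zero]
    unfolding G_def by (simp add: numeral_2_eq_2 numeral_3_eq_3)
  have "(1, comp_pf 1 G [total_pf 1 hd, indicator_pf S]) \<in> K"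
    using S total_rec_in_K[OF total_rec_hd] by (intro closed_comp[OF G]) simp_all
  moreover have "comp_pf 1 G [total_pf 1 hd, indicator_pf S]
      = (\<lambda>xs. if length xs = 1 then if hd xs \<in> S then h xs else Some 0 else None)"
  proof
    fix xs :: "nat list"
    show "comp_pf 1 G [total_pf 1 hd, indicator_pf S] xs
        = (if length xs = 1 then if hd xs \<in> S then h xs else Some 0 else None)"
    proof (cases "length xs = 1")
      case False
      then show ?thesis by (simp add: comp_pf_def)
    next
      case True
      then obtain x where xs: "xs = [x]" by (auto simp: length_Suc_conv)
      have "G [x, 0] = Some 0"
        by (simp add: G_def primrec_pf_def total_pf_apply)
      moreover have "G [x, Suc 0] = h [x]"
        by (simp add: G_def primrec_pf_def total_pf_apply H_def comp_pf_def numeral_3_eq_3)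
      moreover have "comp_pf 1 G [total_pf 1 hd, indicator_pf S] [x] = G [x, if x \<in> S then Suc 0 else 0]"
        by (simp add: comp_pf_def total_pf_apply indicator_pf_def)
      ultimately show ?thesis by (simp add: xs)
    qed
  qed
  ultimately show ?thesis by simp
qed

lemma record_set_indicator_in_K:
  assumes \<alpha>: "(1, \<alpha>) \<in> K" and \<omega>: "(1, \<omega>) \<in> K"
    and dom: "\<forall>m\<in>M. \<alpha> [m] \<noteq> None \<and> \<omega> [m] \<noteq> None"
    and M: "(1, indicator_pf M) \<in> K"
  shows "(1, indicator_pf (record_set M \<alpha> \<omega>)) \<in> K"
proof -
  let ?at_pfst = "\<lambda>f. comp_pf 1 f [total_pf 1 (\<lambda>xs. pfst (hd xs))]"
  define test where "test = total_pf 4 (\<lambda>ys. if ys ! 0 = ys ! 1 \<and> ys ! 2 = ys ! 3 then 1 else 0)"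
  define h where "h = comp_pf 1 test [?at_pfst \<alpha>, total_pf 1 (\<lambda>xs. pfst (psnd (hd xs))),
      ?at_pfst \<omega>, total_pf 1 (\<lambda>xs. psnd (psnd (hd xs)))]"
  have "(1, ?at_pfst f) \<in> K" if "(1, f) \<in> K" for f
    using comp_total_in_K[OF that, of "[\<lambda>xs. pfst (hd xs)]" 1] total_rec_pfst[OF total_rec_hd] by simp
  moreover have test: "(4, test) \<in> K"
    unfolding test_def by (intro total_rec_in_K total_rec_conj total_rec_eq total_rec_proj) simp_all
  ultimately have h: "(1, h) \<in> K"
    unfolding h_def using \<alpha> \<omega>
      total_rec_in_K[OF total_rec_pfst[OF total_rec_psnd[OF total_rec_hd]]]
      total_rec_in_K[OF total_rec_psnd[OF total_rec_psnd[OF total_rec_hd]]]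
    by (intro closed_comp[OF test]) simp_all
  have h_record: "h [t] = Some (if t \<in> record_set M \<alpha> \<omega> then 1 else 0)" if t: "pfst t \<in> M" for t
  proof -
    obtain u v where u: "\<alpha> [pfst t] = Some u" and v: "\<omega> [pfst t] = Some v"
      using dom t by blast
    then have "h [t] = Some (if u = pfst (psnd t) \<and> v = psnd (psnd t) then 1 else 0)"
      by (simp add: h_def test_def comp_pf_def total_pf_apply)
    then show ?thesis using t u v by (auto simp: mem_record_set)
  qed
  have "(\<lambda>xs. if length xs = 1 then if hd xs \<in> pfst -` M then h xs else Some 0 else None)
      = indicator_pf (record_set M \<alpha> \<omega>)"
  proof
    fix xs :: "nat list"
    show "(if length xs = 1 then if hd xs \<in> pfst -` M then h xs else Some 0 else None)
        = indicator_pf (record_set M \<alpha> \<omega>) xs"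
    proof (cases "length xs = 1")
      case True
      then obtain t where "xs = [t]" by (auto simp: length_Suc_conv)
      then show ?thesis
        using h_record[of t] by (cases "pfst t \<in> M") (auto simp: indicator_pf_def mem_record_set)
    qed (simp add: indicator_pf_def)
  qed
  then show ?thesis
    using conditional_in_K[OF indicator_vimage_in_K[OF M total_rec_pfst[OF total_rec_hd]] h] by simp
qed

lemma K_eq_pr_rel:
  assumes indicator_in_K: "(1, indicator_pf B) \<in> K"
    and unary: "\<And>f. (1, f) \<in> K \<Longrightarrow> (1, f) \<in> pr_rel B"
  shows "K = {(k, f). 1 \<le> k \<and> (k, f) \<in> pr_rel B}"
proof (intro equalityI subsetI)
  fix p assume "p \<in> K"
  then obtain k f where p: "p = (k, f)" and f: "(k, f) \<in> K" by (cases p) auto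
  then have k: "1 \<le> k" and wf: "wf_pf k f" using arity by auto
  have "(1, comp_pf 1 f (unpack_pfs k)) \<in> K"
    using contains_pr[of 1, OF _ pr_rel_unpack_pfs[OF k]]
    by (intro closed_comp[OF f]) (simp_all add: unpack_pfs_def)
  then have "(k, f) \<in> pr_rel B" using pr_rel_of_unpacked[OF unary wf k] by blast
  then show "p \<in> {(k, f). 1 \<le> k \<and> (k, f) \<in> pr_rel B}" using p k by simp
next
  fix p assume "p \<in> {(k, f). 1 \<le> k \<and> (k, f) \<in> pr_rel B}"
  then show "p \<in> K" using pr_rel_in_K[OF indicator_in_K] by auto
qed

end

theorem mainTheorem1:
  fixes K :: "(nat \<times> pfun) set"
  assumes arity_ok: "\<forall>(k, f)\<in>K. k \<ge> 1 \<and> wf_pf k f"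
    and contains_pr: "\<forall>k f. k \<ge> 1 \<longrightarrow> partial_recursive k f \<longrightarrow> (k, f) \<in> K"
    and closed_comp: "\<forall>m n h gs. (m, h) \<in> K \<longrightarrow> length gs = m \<longrightarrow> (\<forall>g\<in>set gs. (n, g) \<in> K)
                         \<longrightarrow> (n, comp_pf n h gs) \<in> K"
    and closed_primrec: "\<forall>n g h. ((n \<ge> 1 \<and> (n, g) \<in> K) \<or> (n = 0 \<and> (\<exists>c. g = (\<lambda>xs. if xs = [] then c else None))))
                         \<longrightarrow> (Suc (Suc n), h) \<in> K \<longrightarrow> (Suc n, primrec_pf n g h) \<in> K"
    and closed_mu: "\<forall>n g. n \<ge> 1 \<longrightarrow> (Suc n, g) \<in> K \<longrightarrow> (n, mu_pf n g) \<in> K"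
    and records: "\<forall>f. (1, f) \<in> K \<longrightarrow>
                    (\<exists>M \<alpha> \<omega>. (1, \<alpha>) \<in> K \<and> (1, \<omega>) \<in> K \<and>
                       (\<forall>m\<in>M. \<alpha> [m] \<noteq> None \<and> \<omega> [m] \<noteq> None) \<and>
                       (1, indicator_pf M) \<in> K \<and>
                       (\<forall>x y. f [x] = Some y \<longleftrightarrow> (\<exists>m\<in>M. \<alpha> [m] = Some x \<and> \<omega> [m] = Some y)))"
    and programs: "\<exists>F. (2, F) \<in> K \<and> (\<forall>f. (1, f) \<in> K \<longrightarrow> (\<exists>n. \<forall>x. F [n, x] = f [x]))"
  shows "\<exists>A :: nat set. K = {(k, f). k \<ge> 1 \<and> (k, f) \<in> pr_rel A}"
proof -
  interpret kleene_closed_class K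
  proof
    fix h and c :: "nat option"
    assume "(2, h) \<in> K"
    then show "(1, primrec_pf 0 (\<lambda>xs. if xs = [] then c else None) h) \<in> K"
      using closed_primrec[rule_format, of 0 "\<lambda>xs. if xs = [] then c else None" h]
      by (auto simp: numeral_2_eq_2)
  qed (use arity_ok contains_pr closed_comp closed_primrec closed_mu in \<open>auto simp: numeral_2_eq_2\<close>)
  obtain F where F: "(2, F) \<in> K" and universal: "\<And>f. (1, f) \<in> K \<Longrightarrow> \<exists>c. \<forall>x. F [c, x] = f [x]"
    using programs by blast
  define G where "G = comp_pf 1 F [total_pf 1 (\<lambda>xs. pfst (hd xs)), total_pf 1 (\<lambda>xs. psnd (hd xs))]"
  have "(1, G) \<in> K"
    using comp_total_in_K[OF F, of "[\<lambda>xs. pfst (hd xs), \<lambda>xs. psnd (hd xs)]" 1]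
      total_rec_pfst[OF total_rec_hd] total_rec_psnd[OF total_rec_hd] unfolding G_def by simp
  then obtain M \<alpha> \<omega> where \<alpha>: "(1, \<alpha>) \<in> K" and \<omega>: "(1, \<omega>) \<in> K"
    and dom: "\<forall>m\<in>M. \<alpha> [m] \<noteq> None \<and> \<omega> [m] \<noteq> None" and M: "(1, indicator_pf M) \<in> K"
    and G_records: "\<And>x y. G [x] = Some y \<longleftrightarrow> (\<exists>m\<in>M. \<alpha> [m] = Some x \<and> \<omega> [m] = Some y)"
    using records[rule_format, OF \<open>(1, G) \<in> K\<close>] by blast
  have "(1, f) \<in> pr_rel (record_set M \<alpha> \<omega>)" if f: "(1, f) \<in> K" for f
  proof -
    obtain c where "\<forall>x. F [c, x] = f [x]" using universal[OF f] by blast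
    then have "f [x] = G [prod_encode (c, x)]" for x by (simp add: G_def comp_pf_def total_pf_apply)
    then show ?thesis using pr_rel_record_set_section[OF G_records] arity[OF f] by blast
  qed
  then have "K = {(k, f). 1 \<le> k \<and> (k, f) \<in> pr_rel (record_set M \<alpha> \<omega>)}"
    by (rule K_eq_pr_rel[OF record_set_indicator_in_K[OF \<alpha> \<omega> dom M]])
  then show ?thesis by blast
qed

end
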